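(* Let $d\in\mathbb{N}$. For every $n\ge 2d$ and $\ell\in\mathbb{N}$, viewing cones of symmetric forms as subsets of $\mathbb{R}^{\pi(2d)}$ via coefficients in the bases $\{p^{(m)}_\lambda:\lambda\vdash 2d\}$, we have $\mathcal{P}^S_{\ell n,2d}\subseteq\mathcal{P}^S_{n,2d}$. That is, if $(c_\lambda)$ is such that $\sum_\lambda c_\lambda p^{(\ell n)}_\lambda$ is nonnegative on $\mathbb{R}^{\ell n}$, then $\sum_\lambda c_\lambda p^{(n)}_\lambda$ is nonnegative on $\mathbb{R}^n$.
   Context: $p_i^{(m)}=\frac1m(x_1^i+\dots+x_m^i)$, $p^{(m)}_\lambda=\prod_i p^{(m)}_{\lambda_i}$ for a partition $\lambda$; $\pi(2d)$ is the number of partitions of $2d$; for $m\ge 2d$, $\{p^{(m)}_\lambda:\lambda\vdash 2d\}$ is a basis of the space of symmetric forms of degree $2d$ in $m$ variables. $\mathcal{P}^S_{m,2d}$ is the cone of nonnegative symmetric forms of degree $2d$ in $m$ variables. *)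

theory Defs
  imports Complex_Main
begin

definition partitions :: "nat \<Rightarrow> nat list set" where
  "partitions k = {lam. sorted_wrt (\<ge>) lam \<and> (\<forall>i\<in>set lam. 0 < i) \<and> sum_list lam = k}"

text \<open>Power mean p_i^(m)(x) = (x_1^i + ... + x_m^i)/m; points of R^m are
  functions nat => real, of which only the values at 0..m-1 are used.\<close>
definition pmean :: "nat \<Rightarrow> nat \<Rightarrow> (nat \<Rightarrow> real) \<Rightarrow> real" where
  "pmean m i x = (1 / real m) * (\<Sum>j<m. x j ^ i)"

definition pmean_part :: "nat \<Rightarrow> nat list \<Rightarrow> (nat \<Rightarrow> real) \<Rightarrow> real" where
  "pmean_part m lam x = (\<Prod>i\<leftarrow>lam. pmean m i x)"

definition sym_form :: "nat \<Rightarrow> nat \<Rightarrow> (nat list \<Rightarrow> real) \<Rightarrow> (nat \<Rightarrow> real) \<Rightarrow> real" where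
  "sym_form m k c x = (\<Sum>lam\<in>partitions k. c lam * pmean_part m lam x)"

end

theory Submission
  imports Defs
begin

text \<open>Repeating a point \<open>x\<close> of \<open>\<real>\<^sup>n\<close> \<open>l\<close> times gives a point of \<open>\<real>\<^sup>l\<^sup>n\<close> at which every
  power mean, hence every \<open>p\<^sub>\<lambda>\<close> and every form written in these coordinates, takes the
  same value as at \<open>x\<close>; so the form in \<open>n\<close> variables inherits nonnegativity from the one
  in \<open>l n\<close> variables.\<close>

lemma sum_lessThan_mult_mod:
  fixes f :: "nat \<Rightarrow> 'a::comm_semiring_1"
  shows "(\<Sum>j<l * n. f (j mod n)) = of_nat l * (\<Sum>j<n. f j)"
proof (induction l)
  case 0
  then show ?case by simp
next
  case (Suc l)
  have "(\<Sum>j<Suc l * n. f (j mod n)) = (\<Sum>j<l * n. f (j mod n)) + (\<Sum>j\<in>{l * n..<l * n + n}. f (j mod n))"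
    by (simp add: add.commute lessThan_atLeast0 sum.atLeastLessThan_concat)
  also have "(\<Sum>j\<in>{l * n..<l * n + n}. f (j mod n)) = (\<Sum>j<n. f ((j + l * n) mod n))"
    using sum.shift_bounds_nat_ivl[of "\<lambda>j. f (j mod n)" 0 "l * n" n]
    by (simp add: add.commute lessThan_atLeast0)
  also have "\<dots> = (\<Sum>j<n. f j)"
    by simp
  finally show ?case
    using Suc by (simp add: algebra_simps)
qed

lemma pmean_mod_repeat:
  fixes l n :: nat and x :: "nat \<Rightarrow> real"
  assumes "l \<ge> 1"
  shows "pmean (l * n) i (\<lambda>j. x (j mod n)) = pmean n i x"
proof -
  have "(\<Sum>j<l * n. x (j mod n) ^ i) = real l * (\<Sum>j<n. x j ^ i)"
    using sum_lessThan_mult_mod[where f = "\<lambda>j. x j ^ i" and l = l and n = n] by simp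
  then show ?thesis
    using assms by (simp add: pmean_def)
qed

lemma pmean_part_mod_repeat:
  assumes "l \<ge> 1"
  shows "pmean_part (l * n) lam (\<lambda>j. x (j mod n)) = pmean_part n lam x"
  unfolding pmean_part_def using pmean_mod_repeat[OF assms] by simp

lemma sym_form_mod_repeat:
  assumes "l \<ge> 1"
  shows "sym_form (l * n) k c (\<lambda>j. x (j mod n)) = sym_form n k c x"
  unfolding sym_form_def using pmean_part_mod_repeat[OF assms] by simp

theorem proposition3p5:
  fixes d n l :: nat and c :: "nat list \<Rightarrow> real"
  assumes "n \<ge> 2 * d" and "l \<ge> 1"
    and "\<forall>x :: nat \<Rightarrow> real. sym_form (l * n) (2 * d) c x \<ge> 0"
  shows "\<forall>x :: nat \<Rightarrow> real. sym_form n (2 * d) c x \<ge> 0"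
proof
  fix x :: "nat \<Rightarrow> real"
  have "sym_form n (2 * d) c x = sym_form (l * n) (2 * d) c (\<lambda>j. x (j mod n))"
    using sym_form_mod_repeat[OF assms(2)] by simp
  then show "sym_form n (2 * d) c x \<ge> 0"
    using assms(3) by simp
qed

end
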